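(* Let $P=P(G,[\omega])$ be a toric poset and $i,j\in V$. If $I=[i,j]^{\mathrm{tor}}$, then there exists $\omega'\in[\omega]$ such that $I$ equals the interval $[i,j]=\{k\in V: i\le k\le j\}$ of the poset $P(G,\omega')$. The converse fails in general: for $G$ the path $1-2-3$ and $\omega$ the orientation $1\to2\to3$, the interval $[1,3]$ of $P(G,\omega)$ is $\{1,2,3\}$, whereas $[1,3]^{\mathrm{tor}}=\emptyset$ in $P(G,[\omega])$.
   Context: Toric poset setup: $V=[n]$; $\mathrm{Acyc}(G)$ acyclic orientations; $P(G,\omega)$ the poset on $V$ given by the transitive closure of $\omega$; $[\omega]$ the class under the equivalence generated by converting a source into a sink; toric chambers (components of $\mathbb{R}^V/\mathbb{Z}^V$ minus the hyperplanes $\{x_i\equiv x_j\bmod 1\}$, $\{i,j\}\in E$) correspond bijectively to classes $[\omega]$; $P(G,[\omega])$ is identified with its chamber $c(P)$. Toric chain: $C=\{i_1,\dots,i_m\}$ is a toric chain of $P$ if there is a cyclic class $[(i_1,\dots,i_m)]$ such that for every $x\in c(P)$ (coordinates in $[0,1)$) some cyclic shift $(j_1,\dots,j_m)$ has $0\le x_{j_1}<\dots<x_{j_m}<1$; write $P|_C=[(i_1,\dots,i_m)]$. Toric interval: $[i,i]^{\mathrm{tor}}=\{i\}$; for $i\ne j$, $[i,j]^{\mathrm{tor}}=\emptyset$ if $\{i,j\}$ is not a toric chain and otherwise $[i,j]^{\mathrm{tor}}=\{i,j\}\cup\{k: P|_{\{i,j,k\}}=[(i,k,j)]\}$. Ordinary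 interval $[i,j]$ is empty if $i\not\le j$. *)

theory Defs
  imports Main "HOL.Real"
begin

text \<open>Vertex set V = [n] = {1..n}. A simple graph is a set E of 2-element subsets of V.
  Orientations are relations on V (pairs (a,b) meaning the edge a -> b).\<close>

definition simple_graph :: "nat \<Rightarrow> nat set set \<Rightarrow> bool" where
  "simple_graph n E \<longleftrightarrow> (\<forall>e\<in>E. \<exists>a b. a \<noteq> b \<and> a \<in> {1..n} \<and> b \<in> {1..n} \<and> e = {a, b})"

definition is_orientation :: "nat \<Rightarrow> nat set set \<Rightarrow> (nat \<times> nat) set \<Rightarrow> bool" where
  "is_orientation n E \<omega> \<longleftrightarrow>
     (\<forall>(a,b)\<in>\<omega>. a \<noteq> b \<and> {a, b} \<in> E) \<and>
     (\<forall>a b. a \<noteq> b \<and> {a, b} \<in> E \<longrightarrow> ((a,b) \<in> \<omega> \<longleftrightarrow> (b,a) \<notin> \<omega>))"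

definition Acyc :: "nat \<Rightarrow> nat set set \<Rightarrow> (nat \<times> nat) set set" where
  "Acyc n E = {\<omega>. is_orientation n E \<omega> \<and> acyclic \<omega>}"

definition is_source :: "nat \<Rightarrow> (nat \<times> nat) set \<Rightarrow> nat \<Rightarrow> bool" where
  "is_source n \<omega> i \<longleftrightarrow> i \<in> {1..n} \<and> (\<forall>a. (a, i) \<notin> \<omega>)"

definition flip_at :: "(nat \<times> nat) set \<Rightarrow> nat \<Rightarrow> (nat \<times> nat) set" where
  "flip_at \<omega> i = {(a,b). (a,b) \<in> \<omega> \<and> a \<noteq> i} \<union> {(b,i) | b. (i,b) \<in> \<omega>}"

definition flip_step :: "nat \<Rightarrow> (nat \<times> nat) set \<Rightarrow> (nat \<times> nat) set \<Rightarrow> bool" where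
  "flip_step n \<omega> \<omega>' \<longleftrightarrow> (\<exists>i. is_source n \<omega> i \<and> \<omega>' = flip_at \<omega> i)"

definition tor_class :: "nat \<Rightarrow> (nat \<times> nat) set \<Rightarrow> (nat \<times> nat) set set" where
  "tor_class n \<omega> = {\<omega>'. (\<lambda>a b. flip_step n a b \<or> flip_step n b a)\<^sup>*\<^sup>* \<omega> \<omega>'}"

definition induced_orientation :: "nat set set \<Rightarrow> (nat \<Rightarrow> real) \<Rightarrow> (nat \<times> nat) set" where
  "induced_orientation E x = {(a,b). a \<noteq> b \<and> {a,b} \<in> E \<and> x a < x b}"

text \<open>Toric chamber c(P) of P(G,[\<omega>]), points represented by coordinates in [0,1):
  x lies in it iff it avoids the toric hyperplanes and its induced orientation is in [\<omega>].\<close>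
definition tor_chamber :: "nat \<Rightarrow> nat set set \<Rightarrow> (nat \<times> nat) set \<Rightarrow> (nat \<Rightarrow> real) set" where
  "tor_chamber n E \<omega> = {x. (\<forall>i\<in>{1..n}. 0 \<le> x i \<and> x i < 1) \<and>
      (\<forall>a b. a \<noteq> b \<and> {a,b} \<in> E \<longrightarrow> x a \<noteq> x b) \<and>
      induced_orientation E x \<in> tor_class n \<omega>}"

definition restricts_to :: "nat \<Rightarrow> nat set set \<Rightarrow> (nat \<times> nat) set \<Rightarrow> nat list \<Rightarrow> bool" where
  "restricts_to n E \<omega> cs \<longleftrightarrow> distinct cs \<and> set cs \<subseteq> {1..n} \<and>
     (\<forall>x\<in>tor_chamber n E \<omega>. \<exists>r. sorted_wrt (<) (map x (rotate r cs)) \<and>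
         (\<forall>k\<in>set cs. 0 \<le> x k \<and> x k < 1))"

definition toric_chain :: "nat \<Rightarrow> nat set set \<Rightarrow> (nat \<times> nat) set \<Rightarrow> nat set \<Rightarrow> bool" where
  "toric_chain n E \<omega> C \<longleftrightarrow> (\<exists>cs. set cs = C \<and> restricts_to n E \<omega> cs)"

definition tor_interval :: "nat \<Rightarrow> nat set set \<Rightarrow> (nat \<times> nat) set \<Rightarrow> nat \<Rightarrow> nat \<Rightarrow> nat set" where
  "tor_interval n E \<omega> i j =
     (if i = j then {i}
      else if \<not> toric_chain n E \<omega> {i, j} then {}
      else {i, j} \<union> {k. k \<in> {1..n} \<and> restricts_to n E \<omega> [i, k, j]})"

definition poset_interval :: "nat \<Rightarrow> (nat \<times> nat) set \<Rightarrow> nat \<Rightarrow> nat \<Rightarrow> nat set" where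
  "poset_interval n \<omega> i j = {k. k \<in> {1..n} \<and> (i,k) \<in> \<omega>\<^sup>* \<and> (k,j) \<in> \<omega>\<^sup>*}"

end

theory Submission
  imports Defs
begin

(*
  Represent points of the toric chamber c(P) by lifts to R^V. For an acyclic orientation w,
  the lifts z with 0 < z b - z a < 1 along every edge (a, b) of w form a convex region which
  frac maps into c(P); conversely every point of c(P) lifts into it after an integer
  translation, because converting a source into a sink moves one coordinate by a full turn.

  If {i, j} is a toric chain, take a point of c(P) with x_i = 0 and let w be the orientation
  it induces. Then z_j - z_i stays in (0, 1) on the whole lift region: by convexity it would
  otherwise take an integer value, making x_i = x_j somewhere in c(P). For this w, k lies
  between i and j in P(G, w) exactly when (i, k, j) is cyclically ordered throughout c(P),
  as one sees by comparing with lifts in which a down-set of P(G, w) lies below its complement.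
*)

lemma simple_graph_edge:
  assumes "simple_graph n E" "{a, b} \<in> E"
  shows "a \<noteq> b \<and> a \<in> {1..n} \<and> b \<in> {1..n}"
  using assms unfolding simple_graph_def by (fastforce simp: doubleton_eq_iff)

lemma orientation_edge:
  assumes "is_orientation n E w" "(a, b) \<in> w"
  shows "a \<noteq> b \<and> {a, b} \<in> E"
  using assms unfolding is_orientation_def by blast

lemma orientation_edge_cases:
  assumes "is_orientation n E w" "a \<noteq> b" "{a, b} \<in> E"
  shows "(a, b) \<in> w \<or> (b, a) \<in> w"
  using assms unfolding is_orientation_def by blast

lemma finite_orientation:
  assumes "simple_graph n E" "is_orientation n E w"
  shows "finite w"
proof (rule finite_subset)
  show "w \<subseteq> {1..n} \<times> {1..n}"
    using assms simple_graph_edge orientation_edge by fastforce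
qed simp

lemma is_orientation_induced_orientation:
  assumes "\<forall>a b. a \<noteq> b \<and> {a, b} \<in> E \<longrightarrow> x a \<noteq> x b"
  shows "is_orientation n E (induced_orientation E x)"
  using assms unfolding is_orientation_def induced_orientation_def
  by (auto simp: insert_commute linorder_neq_iff)

lemma induced_orientation_eq:
  assumes "is_orientation n E w" "\<forall>(a, b)\<in>w. x a < x b"
  shows "induced_orientation E x = w"
  using assms unfolding is_orientation_def induced_orientation_def by fastforce

lemma trancl_increasing:
  fixes x :: "'a \<Rightarrow> 'b::order"
  assumes "\<forall>(a, b)\<in>w. x a < x b" "(a, b) \<in> w\<^sup>+"
  shows "x a < x b"
  using assms(2) by induction (use assms(1) in \<open>fastforce dest: less_trans\<close>)+

lemma acyclic_if_increasing:
  fixes x :: "'a \<Rightarrow> 'b::order"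
  assumes "\<forall>(a, b)\<in>w. x a < x b"
  shows "acyclic w"
  using trancl_increasing[OF assms] unfolding acyclic_def by blast

lemma induced_orientation_in_Acyc:
  assumes "\<forall>a b. a \<noteq> b \<and> {a, b} \<in> E \<longrightarrow> x a \<noteq> x b"
  shows "induced_orientation E x \<in> Acyc n E"
  unfolding Acyc_def using is_orientation_induced_orientation[OF assms]
  by (auto intro: acyclic_if_increasing[of _ x] simp: induced_orientation_def)

lemma tor_class_refl: "w \<in> tor_class n w"
  unfolding tor_class_def by simp

lemma tor_class_sym:
  assumes "w' \<in> tor_class n w"
  shows "w \<in> tor_class n w'"
proof -
  have "symp (\<lambda>a b. flip_step n a b \<or> flip_step n b a)"
    by (auto intro: sympI)
  then show ?thesis
    using assms unfolding tor_class_def by (auto dest: symp_rtranclp[THEN sympD])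
qed

lemma tor_class_trans:
  "w' \<in> tor_class n w \<Longrightarrow> w'' \<in> tor_class n w' \<Longrightarrow> w'' \<in> tor_class n w"
  unfolding tor_class_def by (auto elim: rtranclp_trans)

lemma tor_class_eq:
  assumes "w' \<in> tor_class n w"
  shows "tor_class n w' = tor_class n w"
  using assms tor_class_sym tor_class_trans by blast

lemma flip_step_in_tor_class: "flip_step n w w' \<Longrightarrow> w' \<in> tor_class n w"
  unfolding tor_class_def by (simp add: r_into_rtranclp)

lemma tor_chamber_eq:
  assumes "w' \<in> tor_class n w"
  shows "tor_chamber n E w' = tor_chamber n E w"
  unfolding tor_chamber_def tor_class_eq[OF assms] ..

lemma restricts_to_eq:
  assumes "w' \<in> tor_class n w"
  shows "restricts_to n E w' = restricts_to n E w"
  unfolding restricts_to_def tor_chamber_eq[OF assms] ..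

lemma toric_chain_eq:
  assumes "w' \<in> tor_class n w"
  shows "toric_chain n E w' = toric_chain n E w"
  unfolding toric_chain_def restricts_to_eq[OF assms] ..

lemma tor_interval_eq:
  assumes "w' \<in> tor_class n w"
  shows "tor_interval n E w' = tor_interval n E w"
  unfolding tor_interval_def toric_chain_eq[OF assms] restricts_to_eq[OF assms] ..

lemma tor_chamber_range:
  "x \<in> tor_chamber n E w \<Longrightarrow> v \<in> {1..n} \<Longrightarrow> 0 \<le> x v \<and> x v < 1"
  unfolding tor_chamber_def by blast

lemma frac_neq_if_gap:
  fixes c d :: real
  assumes "0 < d - c" "d - c < 1"
  shows "frac c \<noteq> frac d"
proof
  assume "frac c = frac d"
  then obtain m where "d = c + of_int m"
    by (metis frac_eqE)
  with assms show False
    by simp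
qed

definition small_gaps :: "nat set set \<Rightarrow> (nat \<Rightarrow> real) \<Rightarrow> bool" where
  "small_gaps E z \<longleftrightarrow>
     (\<forall>a b. {a, b} \<in> E \<longrightarrow> 0 < \<bar>z a - z b\<bar> \<and> \<bar>z a - z b\<bar> < 1)"

lemma flip_step_lower_top_vertex:
  assumes "v \<in> {1..n}" and near: "\<forall>b. {b, v} \<in> E \<longrightarrow> z b < z v \<and> z v - z b < 1"
  shows "flip_step n (induced_orientation E (z(v := z v - 1))) (induced_orientation E z)"
proof -
  let ?u = "induced_orientation E (z(v := z v - 1))"
  have near': "z b < z v \<and> z v - z b < 1" if "{v, b} \<in> E" for b
    using near that by (simp add: insert_commute)
  have "is_source n ?u v"
    using assms unfolding is_source_def induced_orientation_def by force
  moreover have "flip_at ?u v = induced_orientation E z"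
  proof (rule set_eqI, clarify)
    fix p q
    show "(p, q) \<in> flip_at ?u v \<longleftrightarrow> (p, q) \<in> induced_orientation E z"
      by (cases "p = v"; cases "q = v")
        (auto simp: flip_at_def induced_orientation_def insert_commute dest: near[rule_format] near')
  qed
  ultimately show ?thesis
    unfolding flip_step_def by blast
qed

lemma small_gaps_lower_top_vertex:
  assumes sg: "simple_graph n E" and gaps: "small_gaps E z"
    and v: "v \<in> {1..n}" "\<forall>u\<in>{1..n}. z u \<le> z v"
  shows "small_gaps E (z(v := z v - 1)) \<and>
    flip_step n (induced_orientation E (z(v := z v - 1))) (induced_orientation E z)"
proof -
  have near: "\<forall>b. {b, v} \<in> E \<longrightarrow> z b < z v \<and> z v - z b < 1"
  proof (intro allI impI)
    fix b
    assume edge: "{b, v} \<in> E"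
    then have "z b \<le> z v"
      using v simple_graph_edge[OF sg] by blast
    with gaps edge show "z b < z v \<and> z v - z b < 1"
      unfolding small_gaps_def by fastforce
  qed
  then have "small_gaps E (z(v := z v - 1))"
    using gaps simple_graph_edge[OF sg] unfolding small_gaps_def by (auto simp: insert_commute)
  with flip_step_lower_top_vertex[OF v(1) near] show ?thesis
    by blast
qed

lemma induced_orientation_frac_if_floor_constant:
  assumes sg: "simple_graph n E" and "\<forall>u\<in>{1..n}. \<forall>v\<in>{1..n}. \<lfloor>z u\<rfloor> = \<lfloor>z v\<rfloor>"
  shows "induced_orientation E (\<lambda>v. frac (z v)) = induced_orientation E z"
proof -
  have "frac (z a) < frac (z b) \<longleftrightarrow> z a < z b" if "{a, b} \<in> E" for a b
  proof -
    have "\<lfloor>z a\<rfloor> = \<lfloor>z b\<rfloor>"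
      using assms(2) simple_graph_edge[OF sg that] by auto
    then show ?thesis
      by (simp add: frac_def)
  qed
  then show ?thesis
    unfolding induced_orientation_def by blast
qed

text \<open>Induction on the total height of the integer parts: lowering a top vertex by one
  turns a sink into a source and leaves the fractional parts unchanged.\<close>

lemma frac_induced_orientation_in_tor_class:
  assumes sg: "simple_graph n E" and "small_gaps E z"
  shows "induced_orientation E (\<lambda>v. frac (z v)) \<in> tor_class n (induced_orientation E z)"
proof -
  define L where "L = Min ((\<lambda>v. \<lfloor>z v\<rfloor>) ` {1..n})"
  have "\<forall>v\<in>{1..n}. L \<le> \<lfloor>z v\<rfloor>"
    unfolding L_def by simp
  with assms(2) show ?thesis
  proof (induction "\<Sum>v\<in>{1..n}. nat (\<lfloor>z v\<rfloor> - L)" arbitrary: z rule: less_induct)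
    case less
    note gaps = less.prems(1) and floors = less.prems(2)
    show ?case
    proof (cases "\<forall>u\<in>{1..n}. \<forall>v\<in>{1..n}. \<lfloor>z u\<rfloor> = \<lfloor>z v\<rfloor>")
      case True
      show ?thesis
        unfolding induced_orientation_frac_if_floor_constant[OF sg True] by (rule tor_class_refl)
    next
      case False
      then have fin: "finite (z ` {1..n})" "z ` {1..n} \<noteq> {}"
        by auto
      then obtain v where "v \<in> {1..n}" "Max (z ` {1..n}) = z v"
        using Max_in[OF fin] by blast
      with fin have v: "v \<in> {1..n}" "\<forall>u\<in>{1..n}. z u \<le> z v"
        by (metis Max_ge image_eqI)+
      with False obtain u where "u \<in> {1..n}" "\<lfloor>z u\<rfloor> < \<lfloor>z v\<rfloor>"
        by (metis floor_mono order.not_eq_order_implies_strict)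
      with floors have L_less: "L < \<lfloor>z v\<rfloor>"
        by fastforce
      define z' where "z' = z(v := z v - 1)"
      have floor_z': "\<lfloor>z' u\<rfloor> = (if u = v then \<lfloor>z v\<rfloor> - 1 else \<lfloor>z u\<rfloor>)" for u
        by (simp add: z'_def)
      have gaps': "small_gaps E z'" and flip: "flip_step n (induced_orientation E z') (induced_orientation E z)"
        using small_gaps_lower_top_vertex[OF sg gaps v] unfolding z'_def by auto
      have floors': "\<forall>u\<in>{1..n}. L \<le> \<lfloor>z' u\<rfloor>"
        using floors L_less by (simp add: floor_z')
      have "(\<Sum>u\<in>{1..n}. nat (\<lfloor>z' u\<rfloor> - L)) < (\<Sum>u\<in>{1..n}. nat (\<lfloor>z u\<rfloor> - L))"
        using v(1) L_less by (intro sum_strict_mono_ex1) (auto simp: floor_z')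
      then have "induced_orientation E (\<lambda>u. frac (z' u)) \<in> tor_class n (induced_orientation E z')"
        using less.hyps gaps' floors' by blast
      moreover have "(\<lambda>u. frac (z' u)) = (\<lambda>u. frac (z u))"
        using frac_1_eq[of "z v - 1"] by (auto simp: z'_def)
      moreover have "tor_class n (induced_orientation E z) = tor_class n (induced_orientation E z')"
        using flip by (intro tor_class_eq flip_step_in_tor_class)
      ultimately show ?thesis
        by simp
    qed
  qed
qed

definition lift_region :: "('a \<times> 'a) set \<Rightarrow> ('a \<Rightarrow> real) set" where
  "lift_region w = {z. \<forall>(a, b)\<in>w. 0 < z b - z a \<and> z b - z a < 1}"

lemma lift_regionI:
  "(\<And>a b. (a, b) \<in> w \<Longrightarrow> 0 < z b - z a \<and> z b - z a < 1) \<Longrightarrow> z \<in> lift_region w"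
  unfolding lift_region_def by blast

lemma lift_regionD:
  "z \<in> lift_region w \<Longrightarrow> (a, b) \<in> w \<Longrightarrow> 0 < z b - z a \<and> z b - z a < 1"
  unfolding lift_region_def by blast

lemma frac_in_tor_chamber:
  assumes sg: "simple_graph n E" and orient: "is_orientation n E w" and z: "z \<in> lift_region w"
  shows "(\<lambda>v. frac (z v)) \<in> tor_chamber n E w"
proof -
  have gap: "0 < \<bar>z a - z b\<bar> \<and> \<bar>z a - z b\<bar> < 1" if "{a, b} \<in> E" for a b
  proof -
    have "(a, b) \<in> w \<or> (b, a) \<in> w"
      using orientation_edge_cases[OF orient _ that] simple_graph_edge[OF sg that] by blast
    then show ?thesis
      using lift_regionD[OF z] by fastforce
  qed
  have "induced_orientation E z = w"
    using lift_regionD[OF z] by (intro induced_orientation_eq[OF orient]) auto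
  then have "induced_orientation E (\<lambda>v. frac (z v)) \<in> tor_class n w"
    using frac_induced_orientation_in_tor_class[OF sg] gap unfolding small_gaps_def by metis
  moreover have "frac (z a) \<noteq> frac (z b)" if "{a, b} \<in> E" for a b
    using gap[OF that] frac_neq_if_gap[of "z a" "z b"] frac_neq_if_gap[of "z b" "z a"]
    by (cases "z a < z b") auto
  ultimately show ?thesis
    unfolding tor_chamber_def by (auto simp: frac_lt_1)
qed

lemma lift_region_in_tor_chamber:
  assumes "simple_graph n E" "is_orientation n E w" "z \<in> lift_region w" "\<forall>v. 0 \<le> z v \<and> z v < 1"
  shows "z \<in> tor_chamber n E w"
proof -
  have "(\<lambda>v. frac (z v)) = z"
    using assms(4) by (simp add: frac_eq)
  then show ?thesis
    using frac_in_tor_chamber[OF assms(1-3)] by simp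
qed

lemma induced_orientation_lift_region:
  assumes "simple_graph n E" "\<forall>v\<in>{1..n}. 0 \<le> x v \<and> x v < 1"
  shows "x \<in> lift_region (induced_orientation E x)"
proof (rule lift_regionI)
  fix a b
  assume "(a, b) \<in> induced_orientation E x"
  then have "x a < x b" "a \<in> {1..n}" "b \<in> {1..n}"
    using simple_graph_edge[OF assms(1)] unfolding induced_orientation_def by auto
  moreover from this(2,3) have "0 \<le> x a" "x b < 1"
    using assms(2) by auto
  ultimately show "0 < x b - x a \<and> x b - x a < 1"
    by linarith
qed

lemma lift_region_flip_at:
  assumes source: "\<forall>a. (a, v) \<notin> w" and z: "z \<in> lift_region w"
  shows "z(v := z v + 1) \<in> lift_region (flip_at w v)"
proof (rule lift_regionI)
  let ?y = "z(v := z v + 1)"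
  fix a b
  assume "(a, b) \<in> flip_at w v"
  then consider "(a, b) \<in> w" "a \<noteq> v" | "b = v" "(v, a) \<in> w"
    unfolding flip_at_def by blast
  then show "0 < ?y b - ?y a \<and> ?y b - ?y a < 1"
  proof cases
    case 1
    then show ?thesis
      using source lift_regionD[OF z] by (metis fun_upd_other)
  next
    case 2
    then show ?thesis
      using source lift_regionD[OF z, of v a] by auto
  qed
qed

lemma lift_region_unflip_at:
  assumes source: "\<forall>a. (a, v) \<notin> w" and z: "z \<in> lift_region (flip_at w v)"
  shows "z(v := z v - 1) \<in> lift_region w"
proof (rule lift_regionI)
  let ?y = "z(v := z v - 1)"
  fix a b
  assume ab: "(a, b) \<in> w"
  with source have "b \<noteq> v"
    by blast
  show "0 < ?y b - ?y a \<and> ?y b - ?y a < 1"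
  proof (cases "a = v")
    case True
    with ab have "(b, v) \<in> flip_at w v"
      unfolding flip_at_def by blast
    then show ?thesis
      using lift_regionD[OF z] True \<open>b \<noteq> v\<close> by fastforce
  next
    case False
    with ab have "(a, b) \<in> flip_at w v"
      unfolding flip_at_def by blast
    then show ?thesis
      using lift_regionD[OF z] False \<open>b \<noteq> v\<close> by fastforce
  qed
qed

lemma lift_region_tor_class:
  assumes "w' \<in> tor_class n w" "z \<in> lift_region w"
  shows "\<exists>h. (\<lambda>v. z v + of_int (h v)) \<in> lift_region w'"
  using assms(1) unfolding tor_class_def mem_Collect_eq
proof (induction rule: rtranclp_induct)
  case base
  show ?case
    using assms(2) by (intro exI[of _ "\<lambda>_. 0"]) simp
next
  case (step u u')
  then obtain h where h: "(\<lambda>v. z v + of_int (h v)) \<in> lift_region u"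
    by blast
  from step.hyps(2) show ?case
  proof
    assume "flip_step n u u'"
    then obtain v where "\<forall>a. (a, v) \<notin> u" "u' = flip_at u v"
      unfolding flip_step_def is_source_def by blast
    then have "(\<lambda>x. z x + of_int (h x))(v := z v + of_int (h v) + 1) \<in> lift_region u'"
      using lift_region_flip_at[OF _ h] by simp
    moreover have "(\<lambda>x. z x + of_int (h x))(v := z v + of_int (h v) + 1)
        = (\<lambda>x. z x + of_int ((h(v := h v + 1)) x))"
      by auto
    ultimately show ?case
      by metis
  next
    assume "flip_step n u' u"
    then obtain v where "\<forall>a. (a, v) \<notin> u'" "u = flip_at u' v"
      unfolding flip_step_def is_source_def by blast
    then have "(\<lambda>x. z x + of_int (h x))(v := z v + of_int (h v) - 1) \<in> lift_region u'"
      using lift_region_unflip_at[of v u'] h by simp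
    moreover have "(\<lambda>x. z x + of_int (h x))(v := z v + of_int (h v) - 1)
        = (\<lambda>x. z x + of_int ((h(v := h v - 1)) x))"
      by auto
    ultimately show ?case
      by metis
  qed
qed

lemma tor_chamber_lift:
  assumes "simple_graph n E" "x \<in> tor_chamber n E w"
  shows "\<exists>h. (\<lambda>v. x v + of_int (h v)) \<in> lift_region w"
proof -
  have "x \<in> lift_region (induced_orientation E x)"
    using induced_orientation_lift_region[OF assms(1)] tor_chamber_range[OF assms(2)] by blast
  moreover have "w \<in> tor_class n (induced_orientation E x)"
    using assms(2) tor_class_sym unfolding tor_chamber_def by blast
  ultimately show ?thesis
    using lift_region_tor_class by blast
qed

lemma lift_region_convex:
  assumes "z \<in> lift_region w" "z' \<in> lift_region w" "0 \<le> t" "t \<le> 1"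
  shows "(\<lambda>v. t * z v + (1 - t) * z' v) \<in> lift_region w"
proof (rule lift_regionI)
  fix a b
  assume "(a, b) \<in> w"
  then have d: "0 < z b - z a" "z b - z a < 1" "0 < z' b - z' a" "z' b - z' a < 1"
    using lift_regionD[OF assms(1)] lift_regionD[OF assms(2)] by auto
  have "t * z b + (1 - t) * z' b - (t * z a + (1 - t) * z' a)
      = t * (z b - z a) + (1 - t) * (z' b - z' a)"
    by (simp add: algebra_simps)
  moreover have "0 < t * (z b - z a) + (1 - t) * (z' b - z' a)"
    using d assms(3,4) by (cases "t = 0") (auto intro: add_pos_nonneg)
  moreover have "t * (z b - z a) + (1 - t) * (z' b - z' a) < 1"
    using d assms(3,4) by (intro convex_bound_lt) auto
  ultimately show "0 < t * z b + (1 - t) * z' b - (t * z a + (1 - t) * z' a) \<and>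
      t * z b + (1 - t) * z' b - (t * z a + (1 - t) * z' a) < 1"
    by simp
qed

text \<open>Otherwise the gap would reach \<open>0\<close> or \<open>1\<close> on the segment from \<open>z0\<close> to \<open>z\<close>,
  which lies in the convex lift region.\<close>

lemma lift_region_gap_in_unit_interval:
  assumes sep: "\<forall>z\<in>lift_region w. frac (z i) \<noteq> frac (z j)"
    and z0: "z0 \<in> lift_region w" "0 < z0 j - z0 i" "z0 j - z0 i < 1"
    and z: "z \<in> lift_region w"
  shows "0 < z j - z i \<and> z j - z i < 1"
proof (rule ccontr)
  assume out: "\<not> (0 < z j - z i \<and> z j - z i < 1)"
  define d0 d where "d0 = z0 j - z0 i" and "d = z j - z i"
  define c :: real where "c = (if d \<le> 0 then 0 else 1)"
  define t where "t = (c - d) / (d0 - d)"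
  have "d \<le> c \<and> c < d0 \<or> d0 < c \<and> c \<le> d"
    using out z0(2,3) unfolding d0_def d_def c_def by auto
  then have t: "0 \<le> t" "t \<le> 1" "t * (d0 - d) = c - d"
    unfolding t_def by (auto simp: divide_simps)
  define p where "p v = t * z0 v + (1 - t) * z v" for v
  have "p \<in> lift_region w"
    unfolding p_def using lift_region_convex[OF z0(1) z t(1,2)] .
  moreover have "p j = p i + c"
    using t(3) unfolding p_def d0_def d_def by (simp add: algebra_simps)
  then have "frac (p i) = frac (p j)"
    unfolding c_def by (simp add: frac_1_eq)
  ultimately show False
    using sep by blast
qed

text \<open>A lift is built from the height \<open>rk v\<close> (number of strict predecessors of \<open>v\<close>), with
  the vertices outside \<open>D\<close> pushed up by more than the largest height.\<close>

lemma lift_region_separating: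
  assumes "finite w" "acyclic w" and down: "\<forall>(a, b)\<in>w. b \<in> D \<longrightarrow> a \<in> D"
  shows "\<exists>z\<in>lift_region w. (\<forall>v. 0 \<le> z v \<and> z v < 1) \<and>
    (\<forall>a\<in>D. \<forall>b. b \<notin> D \<longrightarrow> z a < z b)"
proof -
  define N where "N = card (Domain w)"
  define rk where "rk v = card {c. (c, v) \<in> w\<^sup>+}" for v
  have preds: "{c. (c, v) \<in> w\<^sup>+} \<subseteq> Domain w" for v
    by (blast dest: tranclD)
  then have fin: "finite {c. (c, v) \<in> w\<^sup>+}" for v
    using assms(1) by (meson finite_Domain finite_subset)
  have rk_le: "rk v \<le> N" for v
    unfolding rk_def N_def using preds assms(1) by (intro card_mono) (auto simp: finite_Domain)
  have rk_less: "rk a < rk b" if "(a, b) \<in> w" for a b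
  proof -
    have "a \<notin> {c. (c, a) \<in> w\<^sup>+}"
      using assms(2) unfolding acyclic_def by blast
    then have "Suc (rk a) = card (insert a {c. (c, a) \<in> w\<^sup>+})"
      unfolding rk_def using fin by simp
    also have "\<dots> \<le> rk b"
      unfolding rk_def using that fin by (intro card_mono) (auto intro: trancl_into_trancl)
    finally show ?thesis
      by simp
  qed
  define z where "z v = (rk v + (if v \<in> D then 0 else N + 1)) / (2 * N + 3)" for v
  have z_range: "0 \<le> z v \<and> z v < 1" for v
    using rk_le[of v] unfolding z_def by (simp add: divide_simps)
  have z_mono: "z a < z b" if "rk a + (if a \<in> D then 0 else N + 1) < rk b + (if b \<in> D then 0 else N + 1)" for a b
    using that unfolding z_def by (simp add: divide_strict_right_mono)
  have "z \<in> lift_region w"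
  proof (rule lift_regionI)
    fix a b
    assume ab: "(a, b) \<in> w"
    then have "z a < z b"
      using rk_less[OF ab] down by (intro z_mono) auto
    then show "0 < z b - z a \<and> z b - z a < 1"
      using z_range[of a] z_range[of b] by linarith
  qed
  moreover have "z a < z b" if "a \<in> D" "b \<notin> D" for a b
    using that rk_le[of a] by (intro z_mono) auto
  ultimately show ?thesis
    using z_range by blast
qed

lemma lift_region_not_reachable:
  assumes "finite w" "acyclic w" "(a, b) \<notin> w\<^sup>*"
  shows "\<exists>z\<in>lift_region w. (\<forall>v. 0 \<le> z v \<and> z v < 1) \<and> z b < z a"
proof -
  define D where "D = {m. (a, m) \<notin> w\<^sup>*}"
  have "\<forall>(p, q)\<in>w. q \<in> D \<longrightarrow> p \<in> D"
    unfolding D_def by (auto intro: rtrancl_into_rtrancl)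
  then obtain z where "z \<in> lift_region w" "\<forall>v. 0 \<le> z v \<and> z v < 1"
    and "\<forall>p\<in>D. \<forall>q. q \<notin> D \<longrightarrow> z p < z q"
    using lift_region_separating[OF assms(1,2)] by blast
  moreover have "b \<in> D" "a \<notin> D"
    using assms(3) unfolding D_def by auto
  ultimately show ?thesis
    by blast
qed

lemma lift_region_reachable_less:
  assumes "z \<in> lift_region w" "(a, b) \<in> w\<^sup>*" "a \<noteq> b"
  shows "z a < z b"
proof -
  have "\<forall>(p, q)\<in>w. z p < z q"
    using lift_regionD[OF assms(1)] by auto
  moreover have "(a, b) \<in> w\<^sup>+"
    using assms(2,3) by (simp add: rtrancl_eq_or_trancl)
  ultimately show ?thesis
    by (rule trancl_increasing)
qed

definition cyclically_ordered :: "('a \<Rightarrow> real) \<Rightarrow> 'a \<Rightarrow> 'a \<Rightarrow> 'a \<Rightarrow> bool" where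
  "cyclically_ordered x a b c \<longleftrightarrow>
     x a < x b \<and> x b < x c \<or> x b < x c \<and> x c < x a \<or> x c < x a \<and> x a < x b"

lemma sorted_rotate3_iff:
  "(\<exists>r. sorted_wrt (<) (map x (rotate r [a, b, c]))) \<longleftrightarrow> cyclically_ordered x a b c"
proof
  assume "\<exists>r. sorted_wrt (<) (map x (rotate r [a, b, c]))"
  then obtain r where r: "sorted_wrt (<) (map x (rotate (r mod 3) [a, b, c]))"
    by (metis length_Cons list.size(3) numeral_3_eq_3 rotate_conv_mod)
  have "r mod 3 = 0 \<or> r mod 3 = 1 \<or> r mod 3 = 2"
    by auto
  then show "cyclically_ordered x a b c"
    using r unfolding cyclically_ordered_def by (auto simp: numeral_2_eq_2)
next
  assume "cyclically_ordered x a b c"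
  then have "sorted_wrt (<) (map x (rotate 0 [a, b, c])) \<or> sorted_wrt (<) (map x (rotate 1 [a, b, c]))
      \<or> sorted_wrt (<) (map x (rotate 2 [a, b, c]))"
    unfolding cyclically_ordered_def by (auto simp: numeral_2_eq_2)
  then show "\<exists>r. sorted_wrt (<) (map x (rotate r [a, b, c]))"
    by blast
qed

text \<open>Along \<open>a, b, c\<close> the integer parts \<open>h\<close> increase by at most one in total.\<close>

lemma cyclically_ordered_of_lift:
  fixes x :: "'a \<Rightarrow> real" and h :: "'a \<Rightarrow> int"
  assumes "\<forall>v\<in>{a, b, c}. 0 \<le> x v \<and> x v < 1"
    and "x a + h a < x b + h b" "x b + h b < x c + h c" "x c + h c < x a + h a + 1"
  shows "cyclically_ordered x a b c"
proof -
  have "real_of_int (h a) < h b + 1" "real_of_int (h b) < h c + 1" "real_of_int (h c) < h a + 2"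
    using assms by auto
  then have "h a \<le> h b" "h b \<le> h c" "h c \<le> h a + 1"
    by linarith+
  then consider "h b = h a" "h c = h a" | "h b = h a" "h c = h a + 1" | "h b = h a + 1" "h c = h a + 1"
    by linarith
  then show ?thesis
    using assms(2-4) unfolding cyclically_ordered_def by cases auto
qed

lemma toric_chain_pair_iff:
  assumes "i \<noteq> j" "i \<in> {1..n}" "j \<in> {1..n}"
  shows "toric_chain n E w {i, j} \<longleftrightarrow> (\<forall>x\<in>tor_chamber n E w. x i \<noteq> x j)"
proof
  assume "toric_chain n E w {i, j}"
  then obtain cs where cs: "set cs = {i, j}" "restricts_to n E w cs"
    unfolding toric_chain_def by blast
  show "\<forall>x\<in>tor_chamber n E w. x i \<noteq> x j"
  proof
    fix x
    assume "x \<in> tor_chamber n E w"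
    then obtain r where "sorted_wrt (<) (map x (rotate r cs))"
      using cs(2) unfolding restricts_to_def by blast
    then have "inj_on x (set cs)"
      by (simp add: strict_sorted_iff distinct_map)
    then show "x i \<noteq> x j"
      using cs(1) assms(1) unfolding inj_on_def by blast
  qed
next
  assume sep: "\<forall>x\<in>tor_chamber n E w. x i \<noteq> x j"
  have "restricts_to n E w [i, j]"
    unfolding restricts_to_def
  proof (intro conjI ballI)
    fix x
    assume x: "x \<in> tor_chamber n E w"
    then have "sorted_wrt (<) (map x (rotate 0 [i, j])) \<or> sorted_wrt (<) (map x (rotate 1 [i, j]))"
      using sep by (auto simp: linorder_neq_iff)
    moreover have "\<forall>k\<in>set [i, j]. 0 \<le> x k \<and> x k < 1"
      using tor_chamber_range[OF x] assms(2,3) by auto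
    ultimately show "\<exists>r. sorted_wrt (<) (map x (rotate r [i, j])) \<and>
        (\<forall>k\<in>set [i, j]. 0 \<le> x k \<and> x k < 1)"
      by blast
  qed (use assms in auto)
  then show "toric_chain n E w {i, j}"
    unfolding toric_chain_def by (intro exI[of _ "[i, j]"]) simp
qed

lemma toric_chain_lift_frac_neq:
  assumes "simple_graph n E" "is_orientation n E w" "toric_chain n E w {i, j}"
    and "i \<noteq> j" "i \<in> {1..n}" "j \<in> {1..n}" "z \<in> lift_region w"
  shows "frac (z i) \<noteq> frac (z j)"
proof -
  have "\<forall>x\<in>tor_chamber n E w. x i \<noteq> x j"
    using assms(3) toric_chain_pair_iff[OF assms(4-6)] by blast
  from this[rule_format, OF frac_in_tor_chamber[OF assms(1,2,7)]] show ?thesis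
    by simp
qed

lemma poset_interval_self:
  assumes "acyclic w" "i \<in> {1..n}"
  shows "poset_interval n w i i = {i}"
proof -
  have "k = i" if "(i, k) \<in> w\<^sup>*" "(k, i) \<in> w\<^sup>*" for k
  proof (rule ccontr)
    assume "k \<noteq> i"
    with that(1) have "(i, k) \<in> w\<^sup>+"
      by (simp add: rtrancl_eq_or_trancl)
    then have "(i, i) \<in> w\<^sup>+"
      using that(2) by (rule trancl_rtrancl_trancl)
    with assms(1) show False
      unfolding acyclic_def by blast
  qed
  then show ?thesis
    using assms(2) unfolding poset_interval_def by auto
qed

lemma not_toric_chain_poset_interval_empty:
  assumes "i \<noteq> j" "i \<in> {1..n}" "j \<in> {1..n}" "\<not> toric_chain n E w {i, j}"
  shows "\<exists>w'\<in>tor_class n w. poset_interval n w' i j = {}"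
proof -
  obtain x where x: "x \<in> tor_chamber n E w" "x i = x j"
    using assms toric_chain_pair_iff by blast
  define w' where "w' = induced_orientation E x"
  have "w' \<in> tor_class n w"
    using x(1) unfolding tor_chamber_def w'_def by blast
  moreover have "(i, j) \<notin> w'\<^sup>*"
  proof
    assume "(i, j) \<in> w'\<^sup>*"
    with assms(1) have "(i, j) \<in> w'\<^sup>+"
      by (simp add: rtrancl_eq_or_trancl)
    then have "x i < x j"
      by (intro trancl_increasing[of w']) (auto simp: w'_def induced_orientation_def)
    with x(2) show False
      by simp
  qed
  then have "poset_interval n w' i j = {}"
    unfolding poset_interval_def by (blast intro: rtrancl_trans)
  ultimately show ?thesis
    by blast
qed

lemma toric_chain_unit_gap_representative:
  assumes sg: "simple_graph n E" and "w \<in> Acyc n E" "i \<noteq> j" "i \<in> {1..n}" "j \<in> {1..n}"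
    and chain: "toric_chain n E w {i, j}"
  shows "\<exists>w'\<in>tor_class n w. w' \<in> Acyc n E \<and>
    (\<forall>z\<in>lift_region w'. 0 < z j - z i \<and> z j - z i < 1)"
proof -
  have orient: "is_orientation n E w" and "acyclic w"
    using assms(2) unfolding Acyc_def by auto
  have sep: "\<forall>x\<in>tor_chamber n E w. x i \<noteq> x j"
    using chain toric_chain_pair_iff[OF assms(3-5)] by blast
  obtain z where z: "z \<in> lift_region w"
    using lift_region_separating[OF finite_orientation[OF sg orient] \<open>acyclic w\<close>, of UNIV] by blast
  define x where "x v = frac (z v - z i)" for v
  have "(\<lambda>v. z v - z i) \<in> lift_region w"
    using lift_regionD[OF z] by (intro lift_regionI) simp
  then have x: "x \<in> tor_chamber n E w"
    unfolding x_def by (rule frac_in_tor_chamber[OF sg orient])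
  have x_range: "0 \<le> x v \<and> x v < 1" for v
    unfolding x_def by (simp add: frac_lt_1)
  define w' where "w' = induced_orientation E x"
  have in_class: "w' \<in> tor_class n w"
    using x unfolding tor_chamber_def w'_def by blast
  have acyc': "w' \<in> Acyc n E"
    using x unfolding tor_chamber_def w'_def by (intro induced_orientation_in_Acyc) blast
  have "toric_chain n E w' {i, j}"
    using chain toric_chain_eq[OF in_class] by simp
  then have sep': "\<forall>z\<in>lift_region w'. frac (z i) \<noteq> frac (z j)"
    using toric_chain_lift_frac_neq[OF sg _ _ assms(3-5)] acyc' unfolding Acyc_def by blast
  have x_lift: "x \<in> lift_region w'"
    unfolding w'_def using induced_orientation_lift_region[OF sg] x_range by blast
  have "x i = 0" "x j \<noteq> x i"
    using x sep by (auto simp: x_def)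
  then have "0 < x j - x i" "x j - x i < 1"
    using x_range[of j] by auto
  with in_class acyc' show ?thesis
    using lift_region_gap_in_unit_interval[OF sep' x_lift] by blast
qed

context
  fixes n E w i j
  assumes sg: "simple_graph n E" and acyc: "w \<in> Acyc n E"
    and ij: "i \<noteq> j" "i \<in> {1..n}" "j \<in> {1..n}"
    and gap: "\<forall>z\<in>lift_region w. 0 < z j - z i \<and> z j - z i < 1"
begin

lemma unit_gap_orientation: "is_orientation n E w" and unit_gap_finite: "finite w"
  and unit_gap_acyclic: "acyclic w"
  using acyc finite_orientation[OF sg] unfolding Acyc_def by auto

lemma unit_gap_toric_chain: "toric_chain n E w {i, j}"
  unfolding toric_chain_pair_iff[OF ij]
proof
  fix x
  assume x: "x \<in> tor_chamber n E w"
  then obtain h where "(\<lambda>v. x v + of_int (h v)) \<in> lift_region w"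
    using tor_chamber_lift[OF sg] by blast
  with gap have "frac (x i + of_int (h i)) \<noteq> frac (x j + of_int (h j))"
    by (intro frac_neq_if_gap) auto
  then show "x i \<noteq> x j"
    by auto
qed

lemma unit_gap_reachable: "(i, j) \<in> w\<^sup>*"
proof (rule ccontr)
  assume "(i, j) \<notin> w\<^sup>*"
  then obtain z where "z \<in> lift_region w" "z j < z i"
    using lift_region_not_reachable[OF unit_gap_finite unit_gap_acyclic] by blast
  with gap show False
    by fastforce
qed

lemma unit_gap_restricts_to_if_between:
  assumes k: "k \<in> {1..n}" "k \<noteq> i" "k \<noteq> j" and "(i, k) \<in> w\<^sup>*" "(k, j) \<in> w\<^sup>*"
  shows "restricts_to n E w [i, k, j]"
  unfolding restricts_to_def
proof (intro conjI ballI)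
  fix x
  assume x: "x \<in> tor_chamber n E w"
  have range: "\<forall>v\<in>set [i, k, j]. 0 \<le> x v \<and> x v < 1"
    using tor_chamber_range[OF x] k(1) ij(2,3) by auto
  obtain h where h: "(\<lambda>v. x v + of_int (h v)) \<in> lift_region w"
    using tor_chamber_lift[OF sg x] by blast
  have "x i + h i < x k + h k" "x k + h k < x j + h j"
    using lift_region_reachable_less[OF h] assms k by auto
  moreover have "x j + h j < x i + h i + 1"
    using gap h by fastforce
  ultimately have "cyclically_ordered x i k j"
    using range by (intro cyclically_ordered_of_lift) auto
  then obtain r where "sorted_wrt (<) (map x (rotate r [i, k, j]))"
    unfolding sorted_rotate3_iff[symmetric] by blast
  with range show "\<exists>r. sorted_wrt (<) (map x (rotate r [i, k, j])) \<and>
      (\<forall>v\<in>set [i, k, j]. 0 \<le> x v \<and> x v < 1)"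
    by blast
qed (use k ij in auto)

lemma unit_gap_between_if_restricts_to:
  assumes "restricts_to n E w [i, k, j]"
  shows "(i, k) \<in> w\<^sup>* \<and> (k, j) \<in> w\<^sup>*"
proof -
  have cyc: "cyclically_ordered z i k j" if "z \<in> tor_chamber n E w" for z
    using assms that unfolding restricts_to_def sorted_rotate3_iff[symmetric] by blast
  have gap_cyc: "z i < z j \<and> cyclically_ordered z i k j"
    if "z \<in> lift_region w" "\<forall>v. 0 \<le> z v \<and> z v < 1" for z
    using gap that cyc lift_region_in_tor_chamber[OF sg unit_gap_orientation] by fastforce
  show ?thesis
  proof (intro conjI; rule ccontr)
    assume "(i, k) \<notin> w\<^sup>*"
    then obtain z where z: "z \<in> lift_region w" "\<forall>v. 0 \<le> z v \<and> z v < 1" "z k < z i"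
      using lift_region_not_reachable[OF unit_gap_finite unit_gap_acyclic] by blast
    from gap_cyc[OF z(1,2)] z(3) show False
      unfolding cyclically_ordered_def by linarith
  next
    assume "(k, j) \<notin> w\<^sup>*"
    then obtain z where z: "z \<in> lift_region w" "\<forall>v. 0 \<le> z v \<and> z v < 1" "z j < z k"
      using lift_region_not_reachable[OF unit_gap_finite unit_gap_acyclic] by blast
    from gap_cyc[OF z(1,2)] z(3) show False
      unfolding cyclically_ordered_def by linarith
  qed
qed

lemma unit_gap_poset_interval_eq_tor_interval:
  "poset_interval n w i j = tor_interval n E w i j"
proof -
  have "tor_interval n E w i j = {i, j} \<union> {k \<in> {1..n}. restricts_to n E w [i, k, j]}"
    using ij(1) unit_gap_toric_chain unfolding tor_interval_def by simp
  moreover have "{i, j} \<subseteq> poset_interval n w i j"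
    using unit_gap_reachable ij unfolding poset_interval_def by auto
  ultimately show ?thesis
    using unit_gap_restricts_to_if_between unit_gap_between_if_restricts_to
    unfolding poset_interval_def by blast
qed

end

lemma tor_interval_is_poset_interval:
  assumes sg: "simple_graph n E" and acyc: "w \<in> Acyc n E" and "i \<in> {1..n}" "j \<in> {1..n}"
  shows "\<exists>w'\<in>tor_class n w. poset_interval n w' i j = tor_interval n E w i j"
proof (cases "i = j")
  case True
  moreover have "poset_interval n w i i = {i}"
    using acyc assms(3) poset_interval_self unfolding Acyc_def by blast
  ultimately show ?thesis
    using tor_class_refl unfolding tor_interval_def by auto
next
  case ij: False
  show ?thesis
  proof (cases "toric_chain n E w {i, j}")
    case False
    then show ?thesis
      using not_toric_chain_poset_interval_empty ij assms(3,4)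
      unfolding tor_interval_def by simp
  next
    case True
    then obtain w' where w': "w' \<in> tor_class n w" "w' \<in> Acyc n E"
      "\<forall>z\<in>lift_region w'. 0 < z j - z i \<and> z j - z i < 1"
      using toric_chain_unit_gap_representative[OF sg acyc ij assms(3,4)] by blast
    then have "poset_interval n w' i j = tor_interval n E w' i j"
      using unit_gap_poset_interval_eq_tor_interval[OF sg _ ij assms(3,4)] by blast
    with w'(1) show ?thesis
      using tor_interval_eq by metis
  qed
qed

lemma simple_graph_path3: "simple_graph 3 {{1, 2}, {2, 3}}"
proof -
  have "\<exists>a b. a \<noteq> b \<and> a \<in> {1..3} \<and> b \<in> {1..3} \<and> e = {a, b}"
    if "e \<in> {{1, 2}, {2, 3}}" for e :: "nat set"
  proof -
    from that consider "e = {1, 2}" | "e = {2, 3}"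
      by blast
    then show ?thesis
    proof cases
      case 1
      then show ?thesis
        by (intro exI[of _ "1::nat"] exI[of _ "2::nat"]) simp
    next
      case 2
      then show ?thesis
        by (intro exI[of _ "2::nat"] exI[of _ "3::nat"]) simp
    qed
  qed
  then show ?thesis
    unfolding simple_graph_def by blast
qed

lemma path_example:
  "simple_graph 3 {{1, 2}, {2, 3}} \<and> {(1, 2), (2, 3)} \<in> Acyc 3 {{1, 2}, {2, 3}} \<and>
   poset_interval 3 {(1, 2), (2, 3)} 1 3 = {1, 2, 3} \<and>
   tor_interval 3 {{1, 2}, {2, 3}} {(1, 2), (2, 3)} 1 3 = {}"
proof -
  let ?E = "{{1, 2}, {2, 3}} :: nat set set" and ?w = "{(1, 2), (2, 3)} :: (nat \<times> nat) set"
  note sg = simple_graph_path3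
  have "?w = induced_orientation ?E real"
    unfolding induced_orientation_def by (auto simp: doubleton_eq_iff)
  moreover have "induced_orientation ?E real \<in> Acyc 3 ?E"
    by (intro induced_orientation_in_Acyc) simp
  ultimately have acyc: "?w \<in> Acyc 3 ?E"
    by simp
  have "(1, 2) \<in> ?w\<^sup>*" "(2, 3) \<in> ?w\<^sup>*"
    by auto
  then have "(1, 3) \<in> ?w\<^sup>*"
    by (rule rtrancl_trans)
  with \<open>(1, 2) \<in> ?w\<^sup>*\<close> \<open>(2, 3) \<in> ?w\<^sup>*\<close> have "poset_interval 3 ?w 1 3 = {1, 2, 3}"
    unfolding poset_interval_def by auto
  moreover have "\<not> toric_chain 3 ?E ?w {1, 3}"
  proof -
    txt \<open>A chamber point with \<open>x 1 = x 3\<close>, given by its lift \<open>(0, 1/2, 1)\<close>.\<close>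
    define z :: "nat \<Rightarrow> real" where "z v = (real v - 1) / 2" for v
    have "z \<in> lift_region ?w"
      by (intro lift_regionI) (auto simp: z_def)
    then have "(\<lambda>v. frac (z v)) \<in> tor_chamber 3 ?E ?w"
      using frac_in_tor_chamber[OF sg] acyc unfolding Acyc_def by blast
    moreover have "frac (z 1) = frac (z 3)"
      by (simp add: z_def)
    ultimately show ?thesis
      using toric_chain_pair_iff[of 1 3 3 ?E ?w] by auto
  qed
  then have "tor_interval 3 ?E ?w 1 3 = {}"
    unfolding tor_interval_def by simp
  ultimately show ?thesis
    using sg acyc by blast
qed

theorem mainTheorem7:
  shows "(\<forall>n E \<omega> i j. simple_graph n E \<and> \<omega> \<in> Acyc n E \<and> i \<in> {1..n} \<and> j \<in> {1..n} \<longrightarrow>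
            (\<exists>\<omega>'\<in>tor_class n \<omega>. poset_interval n \<omega>' i j = tor_interval n E \<omega> i j))
       \<and> (simple_graph 3 {{1,2},{2,3}} \<and> {(1,2),(2,3)} \<in> Acyc 3 {{1,2},{2,3}} \<and>
          poset_interval 3 {(1,2),(2,3)} 1 3 = {1,2,3} \<and>
          tor_interval 3 {{1,2},{2,3}} {(1,2),(2,3)} 1 3 = {})"
  using tor_interval_is_poset_interval path_example by blast

end
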